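(* Let $R=R_0\oplus\cdots\oplus R_{p-1}$ be a commutative $\mathbb Z/p\mathbb Z$-graded $F$-algebra, $I=\sum_{i+j=p}R_iR_j\subset R_0$, $J=I\oplus R_1\oplus\cdots\oplus R_{p-1}$, and $\tilde R=\cdots\oplus J^2t^{-2}\oplus Jt^{-1}\oplus R\oplus Rt\oplus\cdots\subset R[t,t^{-1}]$ with the induced $\mathbb Z/p\mathbb Z$-grading ($t$ of degree $0$), $\tilde I=\sum_{i+j=p}\tilde R_i\tilde R_j$. Let $X=\mathrm{Spec}\,R$ and $D=\mathrm{Spec}\,\tilde R$ (the deformation variety of $X^G\subset X$). Then $D^G\cong X^G\times\mathbb A^1$, i.e. $\tilde R_0/\tilde I\cong(R_0/I)[t]$.
   Context: $p$ is a prime and $F$ a field; $G=\mu_p$. For an affine scheme $Y=\mathrm{Spec}\,S$ with $\mathbb Z/p\mathbb Z$-graded ring $S=S_0\oplus\cdots\oplus S_{p-1}$ (equivalently a $G$-action), the fixed-point subscheme is $Y^G=\mathrm{Spec}(S_0/\sum_{i+j=p}S_iS_j)$, sums over $1\le i,j\le p-1$. Thus $X^G=\mathrm{Spec}(R/J)=\mathrm{Spec}(R_0/I)$. *)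

theory Defs
  imports "HOL-Algebra.QuotRing" "HOL-Algebra.UnivPoly"
          "HOL-Computational_Algebra.Formal_Laurent_Series"
begin

inductive_set add_closure :: "'b::ab_group_add set \<Rightarrow> 'b set" for S where
  ac_zero: "0 \<in> add_closure S"
| ac_base: "x \<in> S \<Longrightarrow> x \<in> add_closure S"
| ac_add: "x \<in> add_closure S \<Longrightarrow> y \<in> add_closure S \<Longrightarrow> x + y \<in> add_closure S"

inductive_set ideal_gen :: "'b::comm_ring_1 set \<Rightarrow> 'b set" for S where
  ig_zero: "0 \<in> ideal_gen S"
| ig_base: "x \<in> S \<Longrightarrow> x \<in> ideal_gen S"
| ig_add: "x \<in> ideal_gen S \<Longrightarrow> y \<in> ideal_gen S \<Longrightarrow> x + y \<in> ideal_gen S"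
| ig_mult: "x \<in> ideal_gen S \<Longrightarrow> r * x \<in> ideal_gen S"

fun ideal_pow :: "'b::comm_ring_1 set \<Rightarrow> nat \<Rightarrow> 'b set" where
  "ideal_pow J 0 = UNIV"
| "ideal_pow J (Suc k) = ideal_gen {a * b | a b. a \<in> J \<and> b \<in> ideal_pow J k}"

definition zp_graded_F_algebra ::
    "nat \<Rightarrow> ('f::field \<Rightarrow> 'a::comm_ring_1) \<Rightarrow> (nat \<Rightarrow> 'a set) \<Rightarrow> bool" where
  "zp_graded_F_algebra p \<phi> G \<longleftrightarrow>
     \<phi> 1 = 1 \<and> (\<forall>a b. \<phi> (a + b) = \<phi> a + \<phi> b) \<and> (\<forall>a b. \<phi> (a * b) = \<phi> a * \<phi> b) \<and>
     (\<forall>i<p. 0 \<in> G i \<and> (\<forall>x\<in>G i. \<forall>y\<in>G i. x + y \<in> G i) \<and> (\<forall>c. \<forall>x\<in>G i. \<phi> c * x \<in> G i)) \<and>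
     (\<forall>i<p. \<forall>j<p. \<forall>x\<in>G i. \<forall>y\<in>G j. x * y \<in> G ((i + j) mod p)) \<and>
     (\<forall>x. \<exists>!c. (\<forall>i<p. c i \<in> G i) \<and> (\<forall>i\<ge>p. c i = 0) \<and> x = (\<Sum>i<p. c i))"

definition fixed_ideal :: "nat \<Rightarrow> (nat \<Rightarrow> 'b::comm_ring_1 set) \<Rightarrow> 'b set" where
  "fixed_ideal p G = add_closure {x * y | x y. \<exists>i j. 1 \<le> i \<and> i < p \<and> 1 \<le> j \<and> j < p \<and>
      i + j = p \<and> x \<in> G i \<and> y \<in> G j}"

definition J_ideal :: "nat \<Rightarrow> (nat \<Rightarrow> 'b::comm_ring_1 set) \<Rightarrow> 'b set" where
  "J_ideal p G = add_closure (fixed_ideal p G \<union> (\<Union>i\<in>{1..<p}. G i))"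

definition laurent_polys :: "'a::comm_ring_1 fls set" where
  "laurent_polys = {f. finite {n. fls_nth f n \<noteq> 0}}"

text \<open>Extended Rees algebra  ... + J^2 t^-2 + J t^-1 + R + R t + ...\<close>
definition rees_ext :: "nat \<Rightarrow> (nat \<Rightarrow> 'a::comm_ring_1 set) \<Rightarrow> 'a fls set" where
  "rees_ext p G = {f \<in> laurent_polys. \<forall>n<0. fls_nth f n \<in> ideal_pow (J_ideal p G) (nat (- n))}"

text \<open>Induced Z/pZ-grading on the extended Rees algebra (t of degree 0).\<close>
definition rees_grading :: "nat \<Rightarrow> (nat \<Rightarrow> 'a::comm_ring_1 set) \<Rightarrow> nat \<Rightarrow> 'a fls set" where
  "rees_grading p G i = {f \<in> rees_ext p G. \<forall>n. fls_nth f n \<in> G i}"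

definition ring_of :: "'b::comm_ring_1 set \<Rightarrow> 'b ring" where
  "ring_of S = \<lparr>carrier = S, monoid.mult = (*), monoid.one = 1, ring.zero = 0, ring.add = (+)\<rparr>"

end

theory Submission
  imports Defs
begin

text \<open>Write D_i for the graded pieces of the extended Rees algebra: D_0 consists of the Laurent
  polynomials \<open>\<Sum> a_n t^n\<close> with a_n in R_0 and a_(-k) in J^k. For k >= 1 the degree-0 part of
  J^k lies in the degree-0 part of J, which is I. Hence reducing the coefficients of t^n, n >= 0,
  modulo I and discarding the others is a ring homomorphism from D_0 onto (R_0/I)[t]. Its kernel
  contains the fixed ideal of D, whose coefficients all lie in I. Conversely the kernel is spanned
  by the monomials x t^n with x in I and n >= 0, which are products (a t^n) b with a in R_i and
  b in R_(p-i), and by the monomials x t^(-k) with x in the degree-0 part of J^k. The latter is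
  spanned by products y z with y in (J^a)_i, z in (J^b)_(p-i) and a + b = k, so x t^(-k) is a sum
  of products (y t^(-a)) (z t^(-b)) of elements of D_i and D_(p-i).\<close>

unbundle fps_syntax

section \<open>Additive closures and powers of ideals\<close>

lemma add_closure_sum:
  "finite A \<Longrightarrow> (\<And>x. x \<in> A \<Longrightarrow> f x \<in> add_closure S) \<Longrightarrow> sum f A \<in> add_closure S"
  by (induction A rule: finite_induct) (auto intro: add_closure.intros)

lemma add_closure_least:
  assumes "x \<in> add_closure S" "0 \<in> A" "\<And>x y. x \<in> A \<Longrightarrow> y \<in> A \<Longrightarrow> x + y \<in> A"
    and "\<And>x. x \<in> S \<Longrightarrow> x \<in> A"
  shows "x \<in> A"
  using assms(1) by induction (use assms(2-) in auto)

lemma ideal_gen_least: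
  assumes "x \<in> ideal_gen S" "0 \<in> A" "\<And>x y. x \<in> A \<Longrightarrow> y \<in> A \<Longrightarrow> x + y \<in> A"
    and "\<And>r x. x \<in> A \<Longrightarrow> r * x \<in> A" "\<And>x. x \<in> S \<Longrightarrow> x \<in> A"
  shows "x \<in> A"
  using assms(1) by induction (use assms(2-) in auto)

lemma ideal_pow_zero_mem: "0 \<in> ideal_pow J k"
  by (cases k) (auto intro: ideal_gen.intros)

lemma ideal_pow_add: "x \<in> ideal_pow J k \<Longrightarrow> y \<in> ideal_pow J k \<Longrightarrow> x + y \<in> ideal_pow J k"
  by (cases k) (auto intro: ideal_gen.intros)

lemma ideal_pow_mult_left: "x \<in> ideal_pow J k \<Longrightarrow> r * x \<in> ideal_pow J k"
  by (cases k) (auto intro: ideal_gen.intros)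

lemma ideal_pow_minus: "x \<in> ideal_pow J k \<Longrightarrow> - x \<in> ideal_pow J k"
  using ideal_pow_mult_left[of x J k "- 1"] by simp

lemma ideal_pow_sum:
  "finite A \<Longrightarrow> (\<And>x. x \<in> A \<Longrightarrow> f x \<in> ideal_pow J k) \<Longrightarrow> sum f A \<in> ideal_pow J k"
  by (induction A rule: finite_induct) (auto intro: ideal_pow_zero_mem ideal_pow_add)

lemma ideal_pow_Suc_subset: "ideal_pow J (Suc k) \<subseteq> ideal_pow J k"
proof
  fix x assume "x \<in> ideal_pow J (Suc k)"
  then show "x \<in> ideal_pow J k"
    by (auto elim!: ideal_gen_least intro: ideal_pow_zero_mem ideal_pow_add ideal_pow_mult_left)
qed

lemma ideal_pow_antimono: "k \<le> m \<Longrightarrow> ideal_pow J m \<subseteq> ideal_pow J k"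
  by (induction m rule: dec_induct) (use ideal_pow_Suc_subset in blast)+

lemma ideal_pow_one_mem: "x \<in> J \<Longrightarrow> x \<in> ideal_pow J 1"
proof -
  assume "x \<in> J"
  then have "x * 1 \<in> {a * b |a b. a \<in> J \<and> b \<in> ideal_pow J 0}"
    by (intro CollectI exI[of _ x] exI[of _ 1]) simp
  then have "x * 1 \<in> ideal_gen {a * b |a b. a \<in> J \<and> b \<in> ideal_pow J 0}"
    by (rule ideal_gen.ig_base)
  then show ?thesis by simp
qed

lemma ideal_pow_mult:
  "x \<in> ideal_pow J a \<Longrightarrow> y \<in> ideal_pow J b \<Longrightarrow> x * y \<in> ideal_pow J (a + b)"
proof (induction a arbitrary: x)
  case 0
  then show ?case by (simp add: ideal_pow_mult_left)
next
  case (Suc a)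
  let ?A = "{x. x * y \<in> ideal_pow J (Suc (a + b))}"
  have gens: "x \<in> ?A" if "x \<in> {u * v |u v. u \<in> J \<and> v \<in> ideal_pow J a}" for x
  proof -
    from that obtain u v where uv: "x = u * v" "u \<in> J" "v \<in> ideal_pow J a" by blast
    have "v * y \<in> ideal_pow J (a + b)" using Suc.IH[OF uv(3) Suc.prems(2)] .
    then have "u * (v * y) \<in> ideal_pow J (Suc (a + b))"
      using uv(2) by (auto intro: ideal_gen.ig_base)
    then show ?thesis by (simp add: uv(1) mult.assoc del: ideal_pow.simps)
  qed
  have "x \<in> ?A"
  proof (rule ideal_gen_least[OF _ _ _ _ gens])
    show "x \<in> ideal_gen {u * v |u v. u \<in> J \<and> v \<in> ideal_pow J a}"
      using Suc.prems(1) by simp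
  qed (simp_all add: ideal_pow_zero_mem distrib_right ideal_pow_add mult.assoc ideal_pow_mult_left
      del: ideal_pow.simps)
  then show ?case by simp
qed

text \<open>Unfolding \<open>ideal_pow J (Suc k)\<close> into generators would block the closure lemmas above.\<close>
declare ideal_pow.simps(2) [simp del]

section \<open>Laurent polynomials\<close>

lemma laurent_polys_iff: "f \<in> laurent_polys \<longleftrightarrow> (\<exists>N. \<forall>n>N. f $$ n = 0)"
proof
  assume "f \<in> laurent_polys"
  then have "finite {n. f $$ n \<noteq> 0}" by (simp add: laurent_polys_def)
  then obtain N where "\<forall>n\<in>{n. f $$ n \<noteq> 0}. n \<le> N"
    using bdd_above_finite unfolding bdd_above_def by blast
  then show "\<exists>N. \<forall>n>N. f $$ n = 0" by (meson linorder_not_less mem_Collect_eq)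
next
  assume "\<exists>N. \<forall>n>N. f $$ n = 0"
  then obtain N where "\<forall>n>N. f $$ n = 0" by blast
  then have "{n. f $$ n \<noteq> 0} \<subseteq> {fls_subdegree f..N}"
    using fls_subdegree_leI by (auto simp: not_less[symmetric])
  then show "f \<in> laurent_polys" unfolding laurent_polys_def by (auto intro: finite_subset)
qed

lemma laurent_polys_add: "f \<in> laurent_polys \<Longrightarrow> g \<in> laurent_polys \<Longrightarrow> f + g \<in> laurent_polys"
proof -
  assume "f \<in> laurent_polys" "g \<in> laurent_polys"
  then obtain M N where "\<forall>n>M. f $$ n = 0" "\<forall>n>N. g $$ n = 0" by (meson laurent_polys_iff)
  then have "\<forall>n>max M N. (f + g) $$ n = 0" by simp
  then show ?thesis unfolding laurent_polys_iff by blast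
qed

lemma laurent_polys_minus: "f \<in> laurent_polys \<Longrightarrow> - f \<in> laurent_polys"
  by (simp add: laurent_polys_iff)

lemma fls_times_nth_finite_support:
  assumes "f \<in> laurent_polys"
  shows "(f * g) $$ n = (\<Sum>i | f $$ i \<noteq> 0. f $$ i * g $$ (n - i))"
proof -
  define S where "S = {i. f $$ i \<noteq> 0}"
  have "finite S" using assms by (simp add: laurent_polys_def S_def)
  have "(f * g) $$ n = (\<Sum>i = fls_subdegree f..n - fls_subdegree g. f $$ i * g $$ (n - i))"
    by (rule fls_times_nth(2))
  also have "\<dots> = (\<Sum>i\<in>S \<inter> {fls_subdegree f..n - fls_subdegree g}. f $$ i * g $$ (n - i))"
    by (rule sum.mono_neutral_right) (auto simp: S_def)
  also have "\<dots> = (\<Sum>i\<in>S. f $$ i * g $$ (n - i))"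
  proof (rule sum.mono_neutral_left[OF \<open>finite S\<close>])
    show "\<forall>i\<in>S - S \<inter> {fls_subdegree f..n - fls_subdegree g}. f $$ i * g $$ (n - i) = 0"
    proof
      fix i assume "i \<in> S - S \<inter> {fls_subdegree f..n - fls_subdegree g}"
      then have "n - i < fls_subdegree g" using fls_subdegree_leI by (force simp: S_def)
      then show "f $$ i * g $$ (n - i) = 0" by simp
    qed
  qed auto
  finally show ?thesis by (simp add: S_def)
qed

lemma laurent_polys_mult: "f \<in> laurent_polys \<Longrightarrow> g \<in> laurent_polys \<Longrightarrow> f * g \<in> laurent_polys"
proof -
  assume f: "f \<in> laurent_polys" and "g \<in> laurent_polys"
  then obtain M N where M: "\<forall>n>M. f $$ n = 0" and N: "\<forall>n>N. g $$ n = 0"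
    by (meson laurent_polys_iff)
  have "f $$ i * g $$ (n - i) = 0" if "n > M + N" for n i
    using M N that by (cases "i > M") auto
  then have "\<forall>n>M + N. (f * g) $$ n = 0"
    by (simp add: fls_times_nth_finite_support[OF f])
  then show ?thesis unfolding laurent_polys_iff by blast
qed

definition fls_monom :: "'b::comm_ring_1 \<Rightarrow> int \<Rightarrow> 'b fls" where
  "fls_monom x n = fls_shift (- n) (fls_const x)"

lemma fls_monom_nth [simp]: "fls_monom x n $$ m = (if m = n then x else 0)"
  by (simp add: fls_monom_def)

lemma fls_monom_mult: "fls_monom x a * fls_monom y b = fls_monom (x * y) (a + b)"
  unfolding fls_monom_def fls_times_both_shifted_simp by simp

lemma fls_monom_add: "fls_monom x n + fls_monom y n = fls_monom (x + y) n"
  by (rule fls_eqI) simp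

lemma fls_monom_zero [simp]: "fls_monom 0 n = 0"
  by (rule fls_eqI) simp

lemma fls_monom_0: "fls_monom x 0 = fls_const x"
  by (rule fls_eqI) simp

lemma fls_monom_laurent_polys: "fls_monom x n \<in> laurent_polys"
  by (auto simp: laurent_polys_iff intro!: exI[of _ n])

lemma laurent_poly_eq_sum_monoms:
  assumes "f \<in> laurent_polys"
  shows "f = (\<Sum>n | f $$ n \<noteq> 0. fls_monom (f $$ n) n)"
proof (rule fls_eqI)
  fix m
  have "finite {n. f $$ n \<noteq> 0}" using assms by (simp add: laurent_polys_def)
  then show "f $$ m = (\<Sum>n | f $$ n \<noteq> 0. fls_monom (f $$ n) n) $$ m"
    by (simp add: fls_nth_sum)
qed

lemma ring_of_simps [simp]:
  "carrier (ring_of S) = S" "x \<otimes>\<^bsub>ring_of S\<^esub> y = x * y" "x \<oplus>\<^bsub>ring_of S\<^esub> y = x + y"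
  "\<one>\<^bsub>ring_of S\<^esub> = 1" "\<zero>\<^bsub>ring_of S\<^esub> = 0"
  by (simp_all add: ring_of_def)

lemma cring_ring_ofI:
  fixes S :: "'b::comm_ring_1 set"
  assumes "0 \<in> S" "1 \<in> S" "\<And>x y. x \<in> S \<Longrightarrow> y \<in> S \<Longrightarrow> x + y \<in> S"
    and "\<And>x y. x \<in> S \<Longrightarrow> y \<in> S \<Longrightarrow> x * y \<in> S" "\<And>x. x \<in> S \<Longrightarrow> - x \<in> S"
  shows "cring (ring_of S)"
proof (rule cringI)
  show "abelian_group (ring_of S)"
    by (rule abelian_groupI) (auto simp: assms intro!: bexI[of _ "- _"])
  show "Group.comm_monoid (ring_of S)"
    by (rule comm_monoidI) (auto simp: assms mult.assoc mult.commute)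
qed (auto simp: distrib_right)

lemma a_inv_ring_of:
  assumes "cring (ring_of S)" "x \<in> S"
  shows "a_inv (ring_of S) x = - x"
proof -
  interpret cring "ring_of S" by fact
  have "a_inv (ring_of S) x + x = 0"
    using l_neg[of x] assms(2) by simp
  then show ?thesis by (simp add: eq_neg_iff_add_eq_0)
qed

lemma a_r_coset_ring_of: "a_r_coset (ring_of S) H x = (\<lambda>h. h + x) ` H"
  by (auto simp: a_r_coset_def r_coset_def ring_of_def)

lemma ideal_ring_ofI:
  assumes "cring (ring_of S)" "A \<subseteq> S" "0 \<in> A" "\<And>x y. x \<in> A \<Longrightarrow> y \<in> A \<Longrightarrow> x + y \<in> A"
    and "\<And>x. x \<in> A \<Longrightarrow> - x \<in> A" "\<And>r x. r \<in> S \<Longrightarrow> x \<in> A \<Longrightarrow> r * x \<in> A"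
  shows "ideal A (ring_of S)"
proof -
  interpret cring "ring_of S" by fact
  show ?thesis
  proof (rule idealI)
    show "subgroup A (add_monoid (ring_of S))"
      using assms(2-5) a_inv_ring_of[OF assms(1)] by (intro add.subgroupI) auto
  next
    fix a x assume "a \<in> A" "x \<in> carrier (ring_of S)"
    then have "x * a \<in> A" using assms(6) by simp
    then show "a \<otimes>\<^bsub>ring_of S\<^esub> x \<in> A" by (simp add: mult.commute)
  qed (use assms(6) in \<open>auto simp: ring_axioms\<close>)
qed

lemma a_r_coset_ring_of_eq_iff:
  assumes "cring (ring_of S)" "ideal A (ring_of S)" "x \<in> S" "y \<in> S"
  shows "a_r_coset (ring_of S) A x = a_r_coset (ring_of S) A y \<longleftrightarrow> x - y \<in> A"
proof -
  interpret cring "ring_of S" by fact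
  show ?thesis
    using quotient_eq_iff_same_a_r_cos[OF assms(2)] assms(3,4)
    by (simp add: a_minus_def a_inv_ring_of[OF assms(1)])
qed

lemma finsum_ring_of:
  assumes "cring (ring_of S)" "finite A" "f ` A \<subseteq> S"
  shows "finsum (ring_of S) f A = sum f A"
  using assms(2,3)
proof (induction A rule: finite_induct)
  case empty
  interpret cring "ring_of S" by fact
  show ?case by simp
next
  case (insert a A)
  interpret cring "ring_of S" by fact
  have "finsum (ring_of S) f (insert a A) = f a \<oplus>\<^bsub>ring_of S\<^esub> finsum (ring_of S) f A"
    using insert by (intro finsum_insert) auto
  then show ?case using insert by simp
qed

section \<open>Graded algebras and their fixed ideals\<close>

lemma bij_betw_add_mod:
  fixes e n :: nat
  assumes "e \<le> n"
  shows "bij_betw (\<lambda>i. (i + (n - e)) mod n) {..<n} {..<n}"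
proof (rule bij_betwI[where g = "\<lambda>j. (j + e) mod n"])
  fix i assume "i \<in> {..<n}"
  then have "i < n" by simp
  have "((i + (n - e)) mod n + e) mod n = (i + (n - e) + e) mod n"
    by (rule mod_add_left_eq)
  also have "\<dots> = i"
    using assms \<open>i < n\<close> by simp
  finally show "((i + (n - e)) mod n + e) mod n = i" .
  have "((i + e) mod n + (n - e)) mod n = (i + e + (n - e)) mod n"
    by (rule mod_add_left_eq)
  also have "\<dots> = i"
    using assms \<open>i < n\<close> by simp
  finally show "((i + e) mod n + (n - e)) mod n = i" .
qed auto

lemma fixed_ideal_least:
  assumes "x \<in> fixed_ideal p G" "0 \<in> A" "\<And>x y. x \<in> A \<Longrightarrow> y \<in> A \<Longrightarrow> x + y \<in> A"
    and "\<And>i j a b. 1 \<le> i \<Longrightarrow> 1 \<le> j \<Longrightarrow> i + j = p \<Longrightarrow> a \<in> G i \<Longrightarrow> b \<in> G j \<Longrightarrow> a * b \<in> A"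
  shows "x \<in> A"
  using assms(1) unfolding fixed_ideal_def
proof (rule add_closure_least[OF _ assms(2,3)])
  fix x assume "x \<in> {x * y |x y. \<exists>i j. 1 \<le> i \<and> i < p \<and> 1 \<le> j \<and> j < p \<and> i + j = p \<and> x \<in> G i \<and> y \<in> G j}"
  then show "x \<in> A" using assms(4) by blast
qed

lemma fixed_ideal_generator:
  assumes "1 \<le> i" "1 \<le> j" "i + j = p" "a \<in> G i" "b \<in> G j"
  shows "a * b \<in> fixed_ideal p G"
proof -
  have "i < p" "j < p" using assms(1-3) by auto
  then show ?thesis
    unfolding fixed_ideal_def using assms by (intro add_closure.ac_base) blast
qed

lemma fixed_ideal_zero: "0 \<in> fixed_ideal p G"
  unfolding fixed_ideal_def by (rule add_closure.ac_zero)

lemma fixed_ideal_add: "x \<in> fixed_ideal p G \<Longrightarrow> y \<in> fixed_ideal p G \<Longrightarrow> x + y \<in> fixed_ideal p G"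
  unfolding fixed_ideal_def by (rule add_closure.ac_add)

lemma fixed_ideal_sum:
  "finite A \<Longrightarrow> (\<And>x. x \<in> A \<Longrightarrow> f x \<in> fixed_ideal p G) \<Longrightarrow> sum f A \<in> fixed_ideal p G"
  unfolding fixed_ideal_def by (rule add_closure_sum)

locale zp_graded =
  fixes p :: nat and \<phi> :: "'f::field \<Rightarrow> 'a::comm_ring_1" and G :: "nat \<Rightarrow> 'a set"
  assumes one_less_p: "1 < p" and graded: "zp_graded_F_algebra p \<phi> G"
begin

lemma p_pos: "0 < p"
  using one_less_p by simp

lemma G_zero: "i < p \<Longrightarrow> 0 \<in> G i"
  and G_add: "i < p \<Longrightarrow> x \<in> G i \<Longrightarrow> y \<in> G i \<Longrightarrow> x + y \<in> G i"
  and G_scale: "i < p \<Longrightarrow> x \<in> G i \<Longrightarrow> \<phi> c * x \<in> G i"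
  and G_mult: "i < p \<Longrightarrow> j < p \<Longrightarrow> x \<in> G i \<Longrightarrow> y \<in> G j \<Longrightarrow> x * y \<in> G ((i + j) mod p)"
  using graded by (auto simp: zp_graded_F_algebra_def)

lemma G0_mult: "x \<in> G 0 \<Longrightarrow> y \<in> G 0 \<Longrightarrow> x * y \<in> G 0"
  using G_mult[OF p_pos p_pos] by simp

lemma G_minus:
  assumes "i < p" "x \<in> G i"
  shows "- x \<in> G i"
proof -
  have one: "\<phi> 1 = 1" and add: "\<And>a b. \<phi> (a + b) = \<phi> a + \<phi> b"
    using graded by (auto simp: zp_graded_F_algebra_def)
  have "\<phi> 0 = 0"
    using add[of 0 0] by simp
  then have "\<phi> (- 1) + 1 = 0"
    using add[of "- 1" 1] one by simp
  then have "\<phi> (- 1) = - 1"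
    by (simp add: eq_neg_iff_add_eq_0)
  then show ?thesis
    using G_scale[OF assms, of "- 1"] by simp
qed

lemma G_sum:
  assumes "i < p"
  shows "finite A \<Longrightarrow> (\<And>x. x \<in> A \<Longrightarrow> f x \<in> G i) \<Longrightarrow> sum f A \<in> G i"
  by (induction A rule: finite_induct) (auto intro: G_zero G_add assms)

definition hcomp :: "'a \<Rightarrow> nat \<Rightarrow> 'a" where
  "hcomp x = (THE c. (\<forall>i<p. c i \<in> G i) \<and> (\<forall>i\<ge>p. c i = 0) \<and> x = (\<Sum>i<p. c i))"

lemma unique_decomposition: "\<exists>!c. (\<forall>i<p. c i \<in> G i) \<and> (\<forall>i\<ge>p. c i = 0) \<and> x = (\<Sum>i<p. c i)"
  using graded by (auto simp: zp_graded_F_algebra_def)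

lemma hcomp_spec: "(\<forall>i<p. hcomp x i \<in> G i) \<and> (\<forall>i\<ge>p. hcomp x i = 0) \<and> x = (\<Sum>i<p. hcomp x i)"
  unfolding hcomp_def by (rule theI'[OF unique_decomposition])

lemma hcomp_mem: "i < p \<Longrightarrow> hcomp x i \<in> G i"
  using hcomp_spec by blast

lemma sum_hcomp: "(\<Sum>i<p. hcomp x i) = x"
  by (rule sym) (use hcomp_spec in blast)

lemma hcomp_unique:
  assumes "\<And>i. i < p \<Longrightarrow> c i \<in> G i" "\<And>i. p \<le> i \<Longrightarrow> c i = 0" "x = (\<Sum>i<p. c i)"
  shows "hcomp x = c"
  using unique_decomposition[of x] hcomp_spec[of x] assms by blast

lemma hcomp_homogeneous:
  assumes "d < p" "x \<in> G d"
  shows "hcomp x = (\<lambda>i. if i = d then x else 0)"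
  by (rule hcomp_unique) (use assms G_zero in \<open>auto simp: sum.delta\<close>)

lemma hcomp_zero [simp]: "hcomp 0 i = 0"
  using hcomp_homogeneous[OF p_pos G_zero[OF p_pos]] by simp

lemma hcomp_add: "hcomp (x + y) i = hcomp x i + hcomp y i"
proof -
  have "hcomp (x + y) = (\<lambda>i. hcomp x i + hcomp y i)"
    by (rule hcomp_unique) (auto intro: G_add hcomp_mem simp: hcomp_spec sum.distrib sum_hcomp)
  then show ?thesis by simp
qed

lemma hcomp_mult:
  assumes "d < p"
  shows "hcomp (x * y) d = (\<Sum>e<p. hcomp x e * hcomp y ((d + (p - e)) mod p))"
proof -
  define c where "c d = (if d < p then (\<Sum>e<p. hcomp x e * hcomp y ((d + (p - e)) mod p)) else 0)"
    for d
  have "hcomp (x * y) = c"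
  proof (rule hcomp_unique)
    fix i assume i: "i < p"
    have "hcomp x e * hcomp y ((i + (p - e)) mod p) \<in> G i" if "e < p" for e
    proof -
      have "(e + (i + (p - e)) mod p) mod p = i"
        using that i by (simp add: mod_add_right_eq)
      then show ?thesis
        using G_mult[of e "(i + (p - e)) mod p"] that p_pos hcomp_mem by fastforce
    qed
    then show "c i \<in> G i" using i by (auto simp: c_def intro!: G_sum)
  next
    have "(\<Sum>i<p. c i) = (\<Sum>i<p. \<Sum>e<p. hcomp x e * hcomp y ((i + (p - e)) mod p))"
      by (simp add: c_def)
    also have "\<dots> = (\<Sum>e<p. \<Sum>i<p. hcomp x e * hcomp y ((i + (p - e)) mod p))"
      by (rule sum.swap)
    also have "\<dots> = (\<Sum>e<p. hcomp x e * (\<Sum>i<p. hcomp y ((i + (p - e)) mod p)))"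
      by (simp add: sum_distrib_left)
    also have "\<dots> = (\<Sum>e<p. hcomp x e * (\<Sum>i<p. hcomp y i))"
    proof (rule sum.cong[OF refl])
      fix e assume "e \<in> {..<p}"
      then show "hcomp x e * (\<Sum>i<p. hcomp y ((i + (p - e)) mod p)) = hcomp x e * (\<Sum>i<p. hcomp y i)"
        using sum.reindex_bij_betw[OF bij_betw_add_mod, of e p "hcomp y"] by simp
    qed
    also have "\<dots> = x * y"
      by (simp add: sum_distrib_right[symmetric] sum_hcomp)
    finally show "x * y = (\<Sum>i<p. c i)" by simp
  qed (simp add: c_def)
  then show ?thesis using assms by (simp add: c_def)
qed

lemma hcomp_mult_0:
  "hcomp (x * y) 0 = hcomp x 0 * hcomp y 0 + (\<Sum>e\<in>{1..<p}. hcomp x e * hcomp y (p - e))"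
proof -
  have "{..<p} = insert 0 {1..<p}" using p_pos by auto
  then have "hcomp (x * y) 0 = hcomp x 0 * hcomp y 0 + (\<Sum>e\<in>{1..<p}. hcomp x e * hcomp y ((p - e) mod p))"
    using hcomp_mult[OF p_pos] by simp
  also have "(\<Sum>e\<in>{1..<p}. hcomp x e * hcomp y ((p - e) mod p)) = (\<Sum>e\<in>{1..<p}. hcomp x e * hcomp y (p - e))"
    by (rule sum.cong) auto
  finally show ?thesis .
qed

lemma one_mem_G0: "1 \<in> G 0"
proof -
  have shift: "hcomp x i = x * hcomp 1 ((i + (p - j)) mod p)" if "j < p" "i < p" "x \<in> G j" for x i j
  proof -
    have "hcomp (x * 1) i = (\<Sum>e<p. hcomp x e * hcomp 1 ((i + (p - e)) mod p))"
      by (rule hcomp_mult[OF that(2)])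
    also have "\<dots> = (\<Sum>e<p. if e = j then x * hcomp 1 ((i + (p - j)) mod p) else 0)"
      by (rule sum.cong) (simp_all add: hcomp_homogeneous[OF that(1,3)])
    finally show ?thesis using that(1) by simp
  qed
  have vanish: "hcomp 1 k = 0" if "k < p" "k \<noteq> 0" for k
  proof -
    have hk: "hcomp 1 k \<in> G k" and h0: "hcomp 1 0 \<in> G 0"
      using hcomp_mem that(1) p_pos by auto
    have "hcomp 1 k = hcomp (hcomp 1 k) k"
      by (simp add: hcomp_homogeneous[OF that(1) hk])
    also have "\<dots> = hcomp 1 k * hcomp 1 0"
      using shift[OF that(1) that(1) hk] that(1) by simp
    also have "\<dots> = hcomp (hcomp 1 0) k"
      using shift[OF p_pos that(1) h0] that(1) by (simp add: mult.commute)
    also have "\<dots> = 0"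
      using that(2) by (simp add: hcomp_homogeneous[OF p_pos h0])
    finally show ?thesis .
  qed
  have "(1::'a) = (\<Sum>i<p. hcomp 1 i)"
    by (rule sum_hcomp[symmetric])
  also have "\<dots> = (\<Sum>i<p. if i = 0 then hcomp 1 0 else 0)"
    by (rule sum.cong) (auto simp: vanish)
  also have "\<dots> = hcomp 1 0"
    using p_pos by simp
  finally have "hcomp 1 0 = 1" ..
  then show ?thesis
    using hcomp_mem[OF p_pos, of 1] by (simp only:)
qed

lemma phi_mem_G0: "\<phi> c \<in> G 0"
  using G_scale[OF p_pos one_mem_G0, of c] by simp

section \<open>The ideals I and J and the powers of J\<close>

abbreviation I :: "'a set" where "I \<equiv> fixed_ideal p G"
abbreviation J :: "'a set" where "J \<equiv> J_ideal p G"

lemma fixed_ideal_subset_G0: "x \<in> I \<Longrightarrow> x \<in> G 0"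
proof (erule fixed_ideal_least)
  fix i j a b assume "1 \<le> i" "1 \<le> j" "i + j = p" "a \<in> G i" "b \<in> G j"
  then show "a * b \<in> G 0" using G_mult[of i j a b] by simp
qed (use G_zero G_add p_pos in auto)

lemma fixed_ideal_mult:
  assumes "r \<in> G 0" "x \<in> I"
  shows "r * x \<in> I"
proof -
  have "x \<in> {x. r * x \<in> I}"
    using assms(2)
  proof (rule fixed_ideal_least)
    fix i j a b assume ij: "1 \<le> i" "1 \<le> j" "i + j = p" "a \<in> G i" "b \<in> G j"
    then have "r * a \<in> G i" using G_mult[of 0 i r a] assms(1) by simp
    then have "(r * a) * b \<in> I" using fixed_ideal_generator ij by blast
    then show "a * b \<in> {x. r * x \<in> I}" by (simp add: mult.assoc)
  qed (simp_all add: fixed_ideal_zero fixed_ideal_add distrib_left)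
  then show ?thesis by simp
qed

lemma fixed_ideal_minus: "x \<in> I \<Longrightarrow> - x \<in> I"
  using fixed_ideal_mult[OF G_minus[OF p_pos one_mem_G0]] by simp

lemma G_subset_J: "1 \<le> i \<Longrightarrow> i < p \<Longrightarrow> x \<in> G i \<Longrightarrow> x \<in> J"
  unfolding J_ideal_def by (rule add_closure.ac_base) auto

lemma hcomp_J: "x \<in> J \<Longrightarrow> hcomp x d \<in> J"
proof -
  assume "x \<in> J"
  then have "x \<in> {x. hcomp x d \<in> J}"
    unfolding J_ideal_def[of p G]
  proof (rule add_closure_least)
    fix y assume y: "y \<in> I \<union> (\<Union>i\<in>{1..<p}. G i)"
    then obtain i where "i < p" "y \<in> G i"
      using fixed_ideal_subset_G0 p_pos by auto
    then have "hcomp y d = (if d = i then y else 0)"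
      by (simp add: hcomp_homogeneous)
    then show "y \<in> {x. hcomp x d \<in> add_closure (I \<union> (\<Union>i\<in>{1..<p}. G i))}"
      using y by (auto intro: add_closure.intros)
  qed (auto simp: hcomp_add intro: add_closure.intros)
  then show ?thesis by simp
qed

lemma hcomp_J_0: "x \<in> J \<Longrightarrow> hcomp x 0 \<in> I"
proof -
  assume "x \<in> J"
  then have "x \<in> {x. hcomp x 0 \<in> I}"
    unfolding J_ideal_def[of p G]
  proof (rule add_closure_least)
    fix y assume "y \<in> I \<union> (\<Union>i\<in>{1..<p}. G i)"
    then show "y \<in> {x. hcomp x 0 \<in> I}"
      using hcomp_homogeneous[OF p_pos fixed_ideal_subset_G0] hcomp_homogeneous fixed_ideal_zero
      by auto
  qed (simp_all add: hcomp_add fixed_ideal_zero fixed_ideal_add)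
  then show ?thesis by simp
qed

lemma hcomp_ideal_pow: "x \<in> ideal_pow J k \<Longrightarrow> d < p \<Longrightarrow> hcomp x d \<in> ideal_pow J k"
proof (induction k arbitrary: x d)
  case 0
  then show ?case by simp
next
  case (Suc k)
  have "x \<in> {x. \<forall>d<p. hcomp x d \<in> ideal_pow J (Suc k)}"
  proof (rule ideal_gen_least[OF Suc.prems(1)[unfolded ideal_pow.simps(2)]])
    fix y assume "y \<in> {u * v |u v. u \<in> J \<and> v \<in> ideal_pow J k}"
    then obtain u v where y: "y = u * v" "u \<in> J" "v \<in> ideal_pow J k" by blast
    have "hcomp u e * hcomp v d' \<in> ideal_pow J (Suc k)" if "d' < p" for e d'
      using ideal_pow_mult[OF ideal_pow_one_mem[OF hcomp_J[OF y(2)]] Suc.IH[OF y(3) that]] by simp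
    then show "y \<in> {x. \<forall>d<p. hcomp x d \<in> ideal_pow J (Suc k)}"
      using p_pos by (auto simp: y hcomp_mult intro!: ideal_pow_sum)
  next
    fix r y assume "y \<in> {x. \<forall>d<p. hcomp x d \<in> ideal_pow J (Suc k)}"
    then show "r * y \<in> {x. \<forall>d<p. hcomp x d \<in> ideal_pow J (Suc k)}"
      using p_pos by (auto simp: hcomp_mult intro!: ideal_pow_sum ideal_pow_mult_left)
  qed (simp_all add: ideal_pow_zero_mem hcomp_add ideal_pow_add)
  then show ?case using Suc.prems(2) by simp
qed

text \<open>For \<open>k \<ge> 1\<close> this contains the degree-0 part of \<open>J\<^sup>k\<close> (\<open>ideal_pow_G0_subset_weighted\<close>),
  and multiplied by \<open>t\<^sup>-\<^sup>k\<close> its generators become products of elements of \<open>D\<^sub>i\<close> and \<open>D\<^sub>p\<^sub>-\<^sub>i\<close>.\<close>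
definition weighted_fixed_ideal :: "nat \<Rightarrow> 'a set" where
  "weighted_fixed_ideal k = add_closure {y * z | y z. \<exists>i j a b. 1 \<le> i \<and> 1 \<le> j \<and> i + j = p \<and>
     a + b = k \<and> y \<in> G i \<and> y \<in> ideal_pow J a \<and> z \<in> G j \<and> z \<in> ideal_pow J b}"

lemma weighted_fixed_ideal_least:
  assumes "x \<in> weighted_fixed_ideal k" "0 \<in> A" "\<And>x y. x \<in> A \<Longrightarrow> y \<in> A \<Longrightarrow> x + y \<in> A"
    and "\<And>i j a b y z. 1 \<le> i \<Longrightarrow> 1 \<le> j \<Longrightarrow> i + j = p \<Longrightarrow> a + b = k \<Longrightarrow>
      y \<in> G i \<Longrightarrow> y \<in> ideal_pow J a \<Longrightarrow> z \<in> G j \<Longrightarrow> z \<in> ideal_pow J b \<Longrightarrow> y * z \<in> A"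
  shows "x \<in> A"
  using assms(1) unfolding weighted_fixed_ideal_def
proof (rule add_closure_least[OF _ assms(2,3)])
  fix x assume "x \<in> {y * z | y z. \<exists>i j a b. 1 \<le> i \<and> 1 \<le> j \<and> i + j = p \<and>
     a + b = k \<and> y \<in> G i \<and> y \<in> ideal_pow J a \<and> z \<in> G j \<and> z \<in> ideal_pow J b}"
  then show "x \<in> A" using assms(4) by blast
qed

lemma weighted_fixed_ideal_generator:
  "1 \<le> i \<Longrightarrow> 1 \<le> j \<Longrightarrow> i + j = p \<Longrightarrow> a + b = k \<Longrightarrow> y \<in> G i \<Longrightarrow> y \<in> ideal_pow J a \<Longrightarrow>
    z \<in> G j \<Longrightarrow> z \<in> ideal_pow J b \<Longrightarrow> y * z \<in> weighted_fixed_ideal k"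
  unfolding weighted_fixed_ideal_def by (rule add_closure.ac_base) blast

lemma weighted_fixed_ideal_zero: "0 \<in> weighted_fixed_ideal k"
  unfolding weighted_fixed_ideal_def by (rule add_closure.ac_zero)

lemma weighted_fixed_ideal_add:
  "x \<in> weighted_fixed_ideal k \<Longrightarrow> y \<in> weighted_fixed_ideal k \<Longrightarrow> x + y \<in> weighted_fixed_ideal k"
  unfolding weighted_fixed_ideal_def by (rule add_closure.ac_add)

lemma weighted_fixed_ideal_sum:
  "finite A \<Longrightarrow> (\<And>x. x \<in> A \<Longrightarrow> f x \<in> weighted_fixed_ideal k) \<Longrightarrow> sum f A \<in> weighted_fixed_ideal k"
  unfolding weighted_fixed_ideal_def by (rule add_closure_sum)

lemma weighted_fixed_ideal_subset_fixed_ideal: "x \<in> weighted_fixed_ideal k \<Longrightarrow> x \<in> I"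
  by (erule weighted_fixed_ideal_least) (auto intro: fixed_ideal_zero fixed_ideal_add fixed_ideal_generator)

lemma weighted_fixed_ideal_mult:
  assumes "r \<in> G 0" "x \<in> weighted_fixed_ideal k"
  shows "r * x \<in> weighted_fixed_ideal k"
proof -
  have "x \<in> {x. r * x \<in> weighted_fixed_ideal k}"
    using assms(2)
  proof (rule weighted_fixed_ideal_least)
    fix i j a b y z assume ij: "1 \<le> i" "1 \<le> j" "i + j = p" "a + b = k"
      and y: "y \<in> G i" "y \<in> ideal_pow J a" and z: "z \<in> G j" "z \<in> ideal_pow J b"
    have "r * y \<in> G i" using G_mult[of 0 i r y] ij y assms(1) by simp
    then show "y * z \<in> {x. r * x \<in> weighted_fixed_ideal k}"
      using weighted_fixed_ideal_generator[OF ij _ ideal_pow_mult_left[OF y(2)] z] by (simp add: mult.assoc)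
  qed (simp_all add: weighted_fixed_ideal_zero weighted_fixed_ideal_add distrib_left)
  then show ?thesis by simp
qed

lemma fixed_ideal_mult_weighted:
  assumes "x \<in> I" "w \<in> G 0" "w \<in> ideal_pow J k"
  shows "x * w \<in> weighted_fixed_ideal (Suc k)"
proof -
  have "x \<in> {x. x * w \<in> weighted_fixed_ideal (Suc k)}"
    using assms(1)
  proof (rule fixed_ideal_least)
    fix i j a b assume ij: "1 \<le> i" "1 \<le> j" "i + j = p" and a: "a \<in> G i" and b: "b \<in> G j"
    have "a * w \<in> G i" using G_mult[of i 0 a w] ij a assms(2) by simp
    moreover have "a * w \<in> ideal_pow J k" using ideal_pow_mult_left[OF assms(3)] by (simp add: mult.commute)
    moreover have "b \<in> J" using G_subset_J[OF ij(2) _ b] ij by simp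
    then have "b \<in> ideal_pow J 1" by (rule ideal_pow_one_mem)
    ultimately have "(a * w) * b \<in> weighted_fixed_ideal (Suc k)"
      using weighted_fixed_ideal_generator[OF ij, of k 1] b by simp
    then show "a * b \<in> {x. x * w \<in> weighted_fixed_ideal (Suc k)}" by (simp add: ac_simps)
  qed (simp_all add: weighted_fixed_ideal_zero weighted_fixed_ideal_add distrib_right)
  then show ?thesis by simp
qed

lemma hcomp_ideal_pow_0: "x \<in> ideal_pow J (Suc k) \<Longrightarrow> hcomp x 0 \<in> weighted_fixed_ideal (Suc k)"
proof -
  let ?W = "weighted_fixed_ideal (Suc k)"
  have off_diagonal: "hcomp u e * hcomp v (p - e) \<in> ?W"
    if "e \<in> {1..<p}" "hcomp u e \<in> ideal_pow J a" "hcomp v (p - e) \<in> ideal_pow J b" "a + b = Suc k"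
    for u v e a b
    using weighted_fixed_ideal_generator[of e "p - e" a b] that hcomp_mem by auto
  assume x: "x \<in> ideal_pow J (Suc k)"
  have "x \<in> {x \<in> ideal_pow J (Suc k). hcomp x 0 \<in> ?W}"
  proof (rule ideal_gen_least[OF x[unfolded ideal_pow.simps(2)]])
    fix y assume "y \<in> {u * v |u v. u \<in> J \<and> v \<in> ideal_pow J k}"
    then obtain u v where y: "y = u * v" "u \<in> J" "v \<in> ideal_pow J k" by blast
    have "hcomp u 0 * hcomp v 0 \<in> ?W"
      using fixed_ideal_mult_weighted hcomp_J_0[OF y(2)] hcomp_mem[OF p_pos] hcomp_ideal_pow[OF y(3) p_pos]
      by blast
    moreover have "hcomp u e * hcomp v (p - e) \<in> ?W" if "e \<in> {1..<p}" for e
      using off_diagonal[of e u 1 v k] that ideal_pow_one_mem[OF hcomp_J[OF y(2)]] hcomp_ideal_pow[OF y(3)]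
      by auto
    ultimately have "hcomp y 0 \<in> ?W"
      by (auto simp: y hcomp_mult_0 intro!: weighted_fixed_ideal_add weighted_fixed_ideal_sum)
    moreover have "y \<in> ideal_pow J (Suc k)"
      using ideal_pow_mult[OF ideal_pow_one_mem[OF y(2)] y(3)] by (simp add: y)
    ultimately show "y \<in> {x \<in> ideal_pow J (Suc k). hcomp x 0 \<in> ?W}" by simp
  next
    fix r y assume y: "y \<in> {x \<in> ideal_pow J (Suc k). hcomp x 0 \<in> ?W}"
    have "hcomp r 0 * hcomp y 0 \<in> ?W"
      using weighted_fixed_ideal_mult hcomp_mem[OF p_pos] y by blast
    moreover have "hcomp r e * hcomp y (p - e) \<in> ?W" if "e \<in> {1..<p}" for e
      using off_diagonal[of e r 0 y "Suc k"] that y hcomp_ideal_pow by auto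
    ultimately show "r * y \<in> {x \<in> ideal_pow J (Suc k). hcomp x 0 \<in> ?W}"
      using y by (auto simp: hcomp_mult_0 ideal_pow_mult_left intro!: weighted_fixed_ideal_add weighted_fixed_ideal_sum)
  qed (simp_all add: ideal_pow_zero_mem weighted_fixed_ideal_zero hcomp_add ideal_pow_add weighted_fixed_ideal_add)
  then show ?thesis by simp
qed

lemma ideal_pow_G0_subset_weighted:
  "x \<in> ideal_pow J (Suc k) \<Longrightarrow> x \<in> G 0 \<Longrightarrow> x \<in> weighted_fixed_ideal (Suc k)"
  using hcomp_ideal_pow_0[of x k] hcomp_homogeneous[OF p_pos] by simp

section \<open>The extended Rees algebra\<close>

abbreviation D :: "nat \<Rightarrow> 'a fls set" where "D \<equiv> rees_grading p G"
abbreviation ID :: "'a fls set" where "ID \<equiv> fixed_ideal p D"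

lemma rees_grading_iff:
  "f \<in> D i \<longleftrightarrow> f \<in> laurent_polys \<and> (\<forall>n. f $$ n \<in> ideal_pow J (nat (- n))) \<and> (\<forall>n. f $$ n \<in> G i)"
proof -
  have "f $$ n \<in> ideal_pow J (nat (- n))" if "\<not> n < 0" for n
    using that by simp
  then show ?thesis
    unfolding rees_grading_def rees_ext_def by blast
qed

lemma rees_grading_coeff: "f \<in> D i \<Longrightarrow> f $$ n \<in> G i"
  by (simp add: rees_grading_iff)

lemma rees_grading_mult:
  assumes "i < p" "j < p" "f \<in> D i" "g \<in> D j"
  shows "f * g \<in> D ((i + j) mod p)"
proof -
  have f: "f \<in> laurent_polys" and g: "g \<in> laurent_polys"
    using assms(3,4) by (simp_all add: rees_grading_iff)
  have "f $$ k * g $$ (n - k) \<in> ideal_pow J (nat (- n))" for n k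
  proof -
    have "f $$ k \<in> ideal_pow J (nat (- k))" "g $$ (n - k) \<in> ideal_pow J (nat (- (n - k)))"
      using assms(3,4) unfolding rees_grading_iff by blast+
    then have "f $$ k * g $$ (n - k) \<in> ideal_pow J (nat (- k) + nat (- (n - k)))"
      by (rule ideal_pow_mult)
    moreover have "nat (- n) \<le> nat (- k) + nat (- (n - k))" by simp
    ultimately show ?thesis using ideal_pow_antimono by blast
  qed
  moreover have "f $$ k * g $$ (n - k) \<in> G ((i + j) mod p)" for n k
    using assms by (intro G_mult) (simp_all add: rees_grading_iff)
  ultimately show ?thesis
    using laurent_polys_mult[OF f g] f p_pos
    by (auto simp: rees_grading_iff fls_times_nth_finite_support[OF f] laurent_polys_def
        intro!: ideal_pow_sum G_sum)
qed

lemma rees_grading_add: "i < p \<Longrightarrow> f \<in> D i \<Longrightarrow> g \<in> D i \<Longrightarrow> f + g \<in> D i"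
  by (auto simp: rees_grading_iff laurent_polys_add ideal_pow_add G_add)

lemma rees_grading_minus: "i < p \<Longrightarrow> f \<in> D i \<Longrightarrow> - f \<in> D i"
  by (auto simp: rees_grading_iff laurent_polys_minus ideal_pow_minus G_minus)

lemma rees_grading_zero: "i < p \<Longrightarrow> 0 \<in> D i"
  by (auto simp: rees_grading_iff laurent_polys_def ideal_pow_zero_mem G_zero)

lemma fls_monom_in_rees_grading:
  "i < p \<Longrightarrow> x \<in> G i \<Longrightarrow> x \<in> ideal_pow J (nat (- n)) \<Longrightarrow> fls_monom x n \<in> D i"
  by (auto simp: rees_grading_iff fls_monom_laurent_polys ideal_pow_zero_mem G_zero)

lemma fls_const_in_rees_grading: "x \<in> G 0 \<Longrightarrow> fls_const x \<in> D 0"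
  using fls_monom_in_rees_grading[OF p_pos, of x 0] by (simp add: fls_monom_0)

lemma rees_grading_negative_coeff:
  assumes "f \<in> D 0" "n < 0"
  shows "f $$ n \<in> I"
proof -
  have "ideal_pow J (nat (- n)) \<subseteq> ideal_pow J (Suc 0)"
    using assms(2) by (intro ideal_pow_antimono) simp
  then have "f $$ n \<in> ideal_pow J (Suc 0)" "f $$ n \<in> G 0"
    using assms(1) unfolding rees_grading_iff by blast+
  then show ?thesis
    by (blast intro: weighted_fixed_ideal_subset_fixed_ideal ideal_pow_G0_subset_weighted)
qed

lemma fixed_ideal_rees_coeffs:
  assumes "f \<in> ID"
  shows "f \<in> D 0" "f $$ n \<in> I"
proof -
  have "f \<in> {f. f \<in> D 0 \<and> (\<forall>n. f $$ n \<in> I)}"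
    using assms
  proof (rule fixed_ideal_least)
    fix i j g h assume ij: "1 \<le> i" "1 \<le> j" "i + j = p" and g: "g \<in> D i" and h: "h \<in> D j"
    have g_lp: "g \<in> laurent_polys" using g by (simp add: rees_grading_iff)
    have "g * h \<in> D 0"
      using rees_grading_mult[OF _ _ g h] ij by simp
    moreover have "g $$ k * h $$ (n - k) \<in> I" for n k
      using g h by (intro fixed_ideal_generator[OF ij]) (simp_all add: rees_grading_iff)
    then have "(g * h) $$ n \<in> I" for n
      using g_lp by (simp add: fls_times_nth_finite_support[OF g_lp] fixed_ideal_sum laurent_polys_def)
    ultimately show "g * h \<in> {f. f \<in> D 0 \<and> (\<forall>n. f $$ n \<in> I)}" by simp
  qed (auto simp: rees_grading_zero rees_grading_add p_pos fixed_ideal_zero fixed_ideal_add)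
  then show "f \<in> D 0" "f $$ n \<in> I" by simp_all
qed

lemma fls_monom_in_fixed_ideal_rees:
  assumes "x \<in> I" "0 \<le> n"
  shows "fls_monom x n \<in> ID"
proof -
  have "x \<in> {x. fls_monom x n \<in> ID}"
    using assms(1)
  proof (rule fixed_ideal_least)
    fix i j a b assume ij: "1 \<le> i" "1 \<le> j" "i + j = p" "a \<in> G i" "b \<in> G j"
    then have "fls_monom a n * fls_monom b 0 \<in> ID"
      using assms(2) by (intro fixed_ideal_generator[OF ij(1-3)] fls_monom_in_rees_grading) auto
    then show "a * b \<in> {x. fls_monom x n \<in> ID}" by (simp add: fls_monom_mult)
  qed (simp_all add: fixed_ideal_zero fixed_ideal_add flip: fls_monom_add)
  then show ?thesis by simp
qed

lemma fls_monom_weighted_in_fixed_ideal_rees: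
  assumes "x \<in> weighted_fixed_ideal k"
  shows "fls_monom x (- int k) \<in> ID"
proof -
  have "x \<in> {x. fls_monom x (- int k) \<in> ID}"
    using assms
  proof (rule weighted_fixed_ideal_least)
    fix i j a b y z assume ij: "1 \<le> i" "1 \<le> j" "i + j = p" "a + b = k"
      and y: "y \<in> G i" "y \<in> ideal_pow J a" and z: "z \<in> G j" "z \<in> ideal_pow J b"
    have "fls_monom y (- int a) * fls_monom z (- int b) \<in> ID"
      using ij y z by (intro fixed_ideal_generator[OF ij(1-3)] fls_monom_in_rees_grading) auto
    moreover have "- int a + - int b = - int k" using ij(4) by simp
    ultimately show "y * z \<in> {x. fls_monom x (- int k) \<in> ID}"
      by (simp only: fls_monom_mult mem_Collect_eq)
  qed (simp_all add: fixed_ideal_zero fixed_ideal_add flip: fls_monom_add)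
  then show ?thesis by simp
qed

lemma mem_fixed_ideal_rees:
  assumes "f \<in> D 0" "\<And>n. 0 \<le> n \<Longrightarrow> f $$ n \<in> I"
  shows "f \<in> ID"
proof -
  have f: "f \<in> laurent_polys" using assms(1) by (simp add: rees_grading_iff)
  have "fls_monom (f $$ n) n \<in> ID" for n
  proof (cases "0 \<le> n")
    case True
    then show ?thesis using assms(2) fls_monom_in_fixed_ideal_rees by blast
  next
    case False
    define k where "k = nat (- n) - 1"
    have k: "nat (- n) = Suc k" "n = - int (Suc k)"
      using False by (simp_all add: k_def)
    have "f $$ n \<in> ideal_pow J (nat (- n))" "f $$ n \<in> G 0"
      using assms(1) unfolding rees_grading_iff by blast+
    then have "fls_monom (f $$ n) (- int (Suc k)) \<in> ID"
      unfolding k(1) by (intro fls_monom_weighted_in_fixed_ideal_rees ideal_pow_G0_subset_weighted)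
    then show ?thesis
      using k(2) by simp
  qed
  then have "(\<Sum>n | f $$ n \<noteq> 0. fls_monom (f $$ n) n) \<in> ID"
    using f by (intro fixed_ideal_sum) (auto simp: laurent_polys_def)
  then show ?thesis
    using laurent_poly_eq_sum_monoms[OF f] by simp
qed

section \<open>Reduction modulo the fixed ideal\<close>

abbreviation R0 :: "'a ring" where "R0 \<equiv> ring_of (G 0)"
abbreviation Q :: "'a set ring" where "Q \<equiv> R0 Quot I"
abbreviation D0 :: "'a fls ring" where "D0 \<equiv> ring_of (D 0)"
abbreviation cls :: "'a \<Rightarrow> 'a set" where "cls \<equiv> a_r_coset R0 I"

lemma cring_R0: "cring R0"
  by (rule cring_ring_ofI) (auto intro: G_zero one_mem_G0 G_add G0_mult G_minus p_pos)

lemma ideal_fixed_ideal: "ideal I R0"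
  by (rule ideal_ring_ofI[OF cring_R0])
     (auto intro: fixed_ideal_subset_G0 fixed_ideal_zero fixed_ideal_add fixed_ideal_minus fixed_ideal_mult)

lemma cring_Q: "cring Q"
  by (rule ideal.quotient_is_cring[OF ideal_fixed_ideal cring_R0])

lemma cring_UP_Q: "cring (UP Q)"
proof -
  interpret UP_cring Q "UP Q"
    by (simp add: UP_cring_def cring_Q)
  show ?thesis by (rule UP_cring)
qed

lemma cring_D0: "cring D0"
proof (rule cring_ring_ofI)
  show "1 \<in> D 0" using fls_const_in_rees_grading[OF one_mem_G0] by simp
qed (auto intro: rees_grading_zero rees_grading_add rees_grading_minus p_pos
    dest: rees_grading_mult[OF p_pos p_pos])

lemma carrier_Q: "carrier Q = cls ` G 0"
  by (auto simp: FactRing_def A_RCOSETS_def')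

lemma zero_Q: "\<zero>\<^bsub>Q\<^esub> = I"
  by (simp add: FactRing_def)

lemma one_Q: "\<one>\<^bsub>Q\<^esub> = cls 1"
  by (simp add: FactRing_def)

lemma cls_add: "x \<in> G 0 \<Longrightarrow> y \<in> G 0 \<Longrightarrow> cls x \<oplus>\<^bsub>Q\<^esub> cls y = cls (x + y)"
  using ring_hom_add[OF ideal.rcos_ring_hom[OF ideal_fixed_ideal], of x y] by simp

lemma cls_mult: "x \<in> G 0 \<Longrightarrow> y \<in> G 0 \<Longrightarrow> cls x \<otimes>\<^bsub>Q\<^esub> cls y = cls (x * y)"
  using ring_hom_mult[OF ideal.rcos_ring_hom[OF ideal_fixed_ideal], of x y] by simp

lemma cls_eq_iff: "x \<in> G 0 \<Longrightarrow> y \<in> G 0 \<Longrightarrow> cls x = cls y \<longleftrightarrow> x - y \<in> I"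
  by (rule a_r_coset_ring_of_eq_iff[OF cring_R0 ideal_fixed_ideal])

lemma cls_0: "cls 0 = I"
  by (simp add: a_r_coset_ring_of)

lemma cls_eq_0_iff: "x \<in> G 0 \<Longrightarrow> cls x = I \<longleftrightarrow> x \<in> I"
  using cls_eq_iff[of x 0] G_zero[OF p_pos] by (simp add: cls_0)

lemma finsum_cls:
  assumes "finite A" "h ` A \<subseteq> G 0"
  shows "(\<Oplus>\<^bsub>Q\<^esub>x \<in> A. cls (h x)) = cls (sum h A)"
proof -
  have "(\<Oplus>\<^bsub>Q\<^esub>x \<in> A. cls (h x)) = cls (finsum R0 h A)"
    using ring_hom_ring.hom_finsum[OF ideal.rcos_ring_hom_ring[OF ideal_fixed_ideal], of h A] assms(2)
    by (auto simp: Pi_def comp_def)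
  then show ?thesis
    using finsum_ring_of[OF cring_R0 assms] by simp
qed

definition reduce :: "'a fls \<Rightarrow> nat \<Rightarrow> 'a set" where
  "reduce f = (\<lambda>n. cls (f $$ int n))"

lemma reduce_carrier:
  assumes "f \<in> D 0"
  shows "reduce f \<in> carrier (UP Q)"
proof -
  obtain N where N: "\<forall>n>N. f $$ n = 0"
    using assms laurent_polys_iff rees_grading_iff by blast
  have "reduce f i \<in> carrier Q" for i
    using assms by (simp add: reduce_def carrier_Q rees_grading_iff)
  moreover have "bound \<zero>\<^bsub>Q\<^esub> (nat N) (reduce f)"
    unfolding bound_def using N by (auto simp: reduce_def zero_Q cls_0)
  ultimately show ?thesis
    by (auto simp: UP_def up_def)
qed

text \<open>Only the coefficients of nonnegative degree matter modulo \<open>I\<close>, since all others lie in \<open>I\<close>.\<close>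
lemma times_nth_cong_fixed_ideal:
  assumes f: "f \<in> D 0" and g: "g \<in> D 0"
  shows "(f * g) $$ int n - (\<Sum>i\<le>n. f $$ int i * g $$ (int n - int i)) \<in> I"
proof -
  define S where "S = {k. f $$ k \<noteq> 0}"
  define B where "B = {0..int n}"
  define h where "h k = f $$ k * g $$ (int n - k)" for k
  have "finite S" using f by (simp add: rees_grading_iff laurent_polys_def S_def)
  have "(f * g) $$ int n = sum h (S \<union> B)"
    using f \<open>finite S\<close> unfolding h_def S_def B_def rees_grading_iff
    by (auto simp: fls_times_nth_finite_support intro: sum.mono_neutral_left)
  also have "S \<union> B = B \<union> (S - B)" by blast
  also have "sum h (B \<union> (S - B)) = sum h B + sum h (S - B)"
    using \<open>finite S\<close> by (intro sum.union_disjoint) (auto simp: B_def)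
  finally have split: "(f * g) $$ int n = sum h B + sum h (S - B)" .
  have "B = int ` {..n}"
    by (simp add: B_def atMost_atLeast0 image_int_atLeastAtMost)
  then have "(\<Sum>i\<le>n. f $$ int i * g $$ (int n - int i)) = sum h B"
    by (simp add: h_def sum.reindex)
  moreover have "h k \<in> I" if "k \<notin> B" for k
  proof (cases "k < 0")
    case True
    have "g $$ (int n - k) * f $$ k \<in> I"
      by (rule fixed_ideal_mult[OF rees_grading_coeff[OF g] rees_grading_negative_coeff[OF f True]])
    then show ?thesis by (simp add: h_def mult.commute)
  next
    case False
    then have "int n - k < 0" using that by (auto simp: B_def)
    then show ?thesis
      using fixed_ideal_mult[OF rees_grading_coeff[OF f] rees_grading_negative_coeff[OF g]]
      by (simp add: h_def)
  qed
  then have "sum h (S - B) \<in> I"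
    using \<open>finite S\<close> by (intro fixed_ideal_sum) auto
  ultimately show ?thesis
    using split by simp
qed

lemma reduce_mult:
  assumes f: "f \<in> D 0" and g: "g \<in> D 0"
  shows "reduce (f * g) = reduce f \<otimes>\<^bsub>UP Q\<^esub> reduce g"
proof -
  have coeff: "f $$ k \<in> G 0" "g $$ k \<in> G 0" for k
    using f g by (simp_all add: rees_grading_iff)
  have "reduce f \<otimes>\<^bsub>UP Q\<^esub> reduce g = (\<lambda>n. \<Oplus>\<^bsub>Q\<^esub>i \<in> {..n}. reduce f i \<otimes>\<^bsub>Q\<^esub> reduce g (n - i))"
    using reduce_carrier[OF f] reduce_carrier[OF g] by (simp add: UP_def)
  also have "\<dots> = (\<lambda>n. cls (\<Sum>i\<le>n. f $$ int i * g $$ (int n - int i)))"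
  proof
    fix n
    interpret Q: cring Q by (rule cring_Q)
    have "(\<Oplus>\<^bsub>Q\<^esub>i \<in> {..n}. reduce f i \<otimes>\<^bsub>Q\<^esub> reduce g (n - i))
        = (\<Oplus>\<^bsub>Q\<^esub>i \<in> {..n}. cls (f $$ int i * g $$ (int n - int i)))"
      by (rule Q.finsum_cong') (auto simp: reduce_def cls_mult coeff G0_mult carrier_Q of_nat_diff)
    also have "\<dots> = cls (\<Sum>i\<le>n. f $$ int i * g $$ (int n - int i))"
      by (rule finsum_cls) (use coeff G0_mult in auto)
    finally show "(\<Oplus>\<^bsub>Q\<^esub>i \<in> {..n}. reduce f i \<otimes>\<^bsub>Q\<^esub> reduce g (n - i))
        = cls (\<Sum>i\<le>n. f $$ int i * g $$ (int n - int i))" .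
  qed
  also have "\<dots> = reduce (f * g)"
  proof
    fix n
    have "(f * g) $$ int n \<in> G 0"
      using rees_grading_coeff rees_grading_mult[OF p_pos p_pos f g] by simp
    moreover have "(\<Sum>i\<le>n. f $$ int i * g $$ (int n - int i)) \<in> G 0"
      using coeff G0_mult p_pos by (auto intro: G_sum)
    ultimately have "cls ((f * g) $$ int n) = cls (\<Sum>i\<le>n. f $$ int i * g $$ (int n - int i))"
      using times_nth_cong_fixed_ideal[OF f g, of n] by (simp add: cls_eq_iff)
    then show "cls (\<Sum>i\<le>n. f $$ int i * g $$ (int n - int i)) = reduce (f * g) n"
      by (simp add: reduce_def)
  qed
  finally show ?thesis by simp
qed

lemma reduce_add:
  assumes "f \<in> D 0" "g \<in> D 0"
  shows "reduce (f + g) = reduce f \<oplus>\<^bsub>UP Q\<^esub> reduce g"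
  using reduce_carrier[OF assms(1)] reduce_carrier[OF assms(2)]
  by (simp add: UP_def reduce_def cls_add rees_grading_coeff[OF assms(1)] rees_grading_coeff[OF assms(2)])

lemma reduce_one: "reduce 1 = \<one>\<^bsub>UP Q\<^esub>"
  by (rule ext) (simp add: UP_def reduce_def one_Q zero_Q cls_0)

lemma reduce_fls_const: "x \<in> G 0 \<Longrightarrow> reduce (fls_const x) = up_ring.monom (UP Q) (cls x) 0"
  by (rule ext) (simp add: UP_def reduce_def zero_Q cls_0 carrier_Q)

lemma reduce_ring_hom_ring: "ring_hom_ring D0 (UP Q) reduce"
proof (rule ring_hom_ringI2)
  show "ring D0" using cring_D0 by (rule cring.axioms(1))
  show "ring (UP Q)" using cring_UP_Q by (rule cring.axioms(1))
  show "reduce \<in> ring_hom D0 (UP Q)"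
    by (rule ring_hom_memI) (simp_all add: reduce_carrier reduce_mult reduce_add reduce_one)
qed

lemma reduce_kernel: "a_kernel D0 (UP Q) reduce = ID"
proof -
  have "reduce f = \<zero>\<^bsub>UP Q\<^esub> \<longleftrightarrow> (\<forall>n\<ge>0. f $$ n \<in> I)" if "f \<in> D 0" for f
  proof -
    have "reduce f = \<zero>\<^bsub>UP Q\<^esub> \<longleftrightarrow> (\<forall>i. f $$ int i \<in> I)"
      using that by (auto simp: UP_def zero_Q reduce_def fun_eq_iff cls_eq_0_iff rees_grading_coeff)
    also have "\<dots> \<longleftrightarrow> (\<forall>n\<ge>0. f $$ n \<in> I)"
      by (metis nonneg_int_cases of_nat_0_le_iff)
    finally show ?thesis .
  qed
  then show ?thesis
    using fixed_ideal_rees_coeffs mem_fixed_ideal_rees by (auto simp: a_kernel_def')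
qed

lemma reduce_surj: "reduce ` D 0 = carrier (UP Q)"
proof
  show "reduce ` D 0 \<subseteq> carrier (UP Q)"
    using reduce_carrier by blast
next
  show "carrier (UP Q) \<subseteq> reduce ` D 0"
  proof
    fix q assume q: "q \<in> carrier (UP Q)"
    then obtain N where N: "\<And>m. N < m \<Longrightarrow> q m = I"
      by (auto simp: UP_def up_def zero_Q bound_def)
    have "q \<in> UNIV \<rightarrow> carrier Q"
      using q by (simp add: UP_def up_def)
    then have "\<forall>i. \<exists>x. x \<in> G 0 \<and> q i = cls x"
      unfolding carrier_Q by blast
    then obtain a where a: "\<And>i. a i \<in> G 0 \<and> q i = cls (a i)"
      by metis
    define f where "f = fps_to_fls (Abs_fps (\<lambda>i. if i \<le> N then a i else 0))"
    have f_nth: "f $$ n = (if n < 0 then 0 else if nat n \<le> N then a (nat n) else 0)" for n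
      by (simp add: f_def)
    have "f \<in> D 0"
      unfolding rees_grading_iff laurent_polys_iff
      using a G_zero[OF p_pos]
      by (auto simp: f_nth ideal_pow_zero_mem intro!: exI[of _ "int N"])
    moreover have "reduce f = q"
    proof
      fix i show "reduce f i = q i"
        using a[of i] N[of i] by (cases "i \<le> N") (simp_all add: reduce_def f_nth cls_0)
    qed
    ultimately show "q \<in> reduce ` D 0" by blast
  qed
qed

theorem rees_fixed_quotient_iso:
  "\<exists>h \<in> ring_iso (D0 Quot ID) (UP Q).
     \<forall>c. h (a_r_coset D0 ID (fls_const (\<phi> c))) = up_ring.monom (UP Q) (cls (\<phi> c)) 0"
proof -
  interpret reduce: ring_hom_ring D0 "UP Q" reduce
    by (rule reduce_ring_hom_ring)
  have "reduce ` carrier D0 = carrier (UP Q)"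
    by (simp add: reduce_surj)
  then have "(\<lambda>X. the_elem (reduce ` X)) \<in> ring_iso (D0 Quot a_kernel D0 (UP Q) reduce) (UP Q)"
    by (rule reduce.FactRing_iso_set)
  then have iso: "(\<lambda>X. the_elem (reduce ` X)) \<in> ring_iso (D0 Quot ID) (UP Q)"
    by (simp only: reduce_kernel)
  have image_const: "the_elem (reduce ` a_r_coset D0 ID (fls_const (\<phi> c)))
      = up_ring.monom (UP Q) (cls (\<phi> c)) 0" for c
  proof -
    have "the_elem (reduce ` a_r_coset D0 (a_kernel D0 (UP Q) reduce) (fls_const (\<phi> c)))
        = reduce (fls_const (\<phi> c))"
      by (rule reduce.the_elem_simp) (simp add: fls_const_in_rees_grading phi_mem_G0)
    then show ?thesis
      by (simp only: reduce_kernel reduce_fls_const[OF phi_mem_G0])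
  qed
  show ?thesis
    using image_const by (intro bexI[OF _ iso]) simp
qed

end

theorem corollary2p6:
  fixes p :: nat and \<phi> :: "'f::field \<Rightarrow> 'a::comm_ring_1" and G :: "nat \<Rightarrow> 'a set"
  assumes "prime p"
    and "zp_graded_F_algebra p \<phi> G"
  shows "\<exists>h \<in> ring_iso (ring_of (rees_grading p G 0) Quot fixed_ideal p (rees_grading p G))
                     (UP (ring_of (G 0) Quot fixed_ideal p G)).
           \<forall>c. h (a_r_coset (ring_of (rees_grading p G 0)) (fixed_ideal p (rees_grading p G))
                    (fls_const (\<phi> c)))
               = up_ring.monom (UP (ring_of (G 0) Quot fixed_ideal p G))
                   (a_r_coset (ring_of (G 0)) (fixed_ideal p G) (\<phi> c)) 0"
proof -
  interpret zp_graded p \<phi> G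
    by (rule zp_graded.intro[OF prime_gt_1_nat[OF assms(1)] assms(2)])
  show ?thesis by (rule rees_fixed_quotient_iso)
qed

end
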